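(* Let $f:X\to Y$ be a continuous map between sober topological spaces, and let $f^{\#}:C(Y)\to C(X)$, $W\mapsto f^{-1}(W)$. The following are equivalent: (1) $f$ is an epimorphism in the category $\mathbf{Sob}$ of sober spaces and continuous maps; (2) $f^{\#}$ is injective; (3) $f^{\#}$ is a monomorphism in the category of complete idealic semirings; (4) for every closed subset $z$ of $Y$, the set $f(X)\cap z$ is dense in $z$.
   Context: A topological space is sober if every irreducible closed subset has a unique generic point. An idealic semiring is a set with two commutative associative operations $+,\cdot$ with units $0,1$, where $+$ is idempotent, $\cdot$ distributes over $+$, $0$ is absorbing for $\cdot$ and $1$ is absorbing for $+$; it is complete if arbitrary (infinite) sums exist and multiplication distributes over them, and morphisms of complete idealic semirings preserve $0,1$, products and arbitrary sums. For a sober space $X$, $C(X)$ is the set of closed subsets with $Z+W=Z\cap W$ (arbitrary sums being intersections), $Z\cdot W=Z\cup W$, $0=X$, $1=\emptyset$; this is a complete idealic semiring with idempotent multiplication, and $f^{\#}$ is a morphism of such. *)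

theory Defs
  imports "HOL-Analysis.Analysis"
begin

definition irreducible_closed :: "'a topology \<Rightarrow> 'a set \<Rightarrow> bool" where
  "irreducible_closed X Z \<longleftrightarrow> closedin X Z \<and> Z \<noteq> {} \<and>
     (\<forall>A B. closedin X A \<and> closedin X B \<and> Z = A \<union> B \<longrightarrow> Z = A \<or> Z = B)"

definition generic_point :: "'a topology \<Rightarrow> 'a set \<Rightarrow> 'a \<Rightarrow> bool" where
  "generic_point X Z x \<longleftrightarrow> x \<in> topspace X \<and> X closure_of {x} = Z"

definition sober :: "'a topology \<Rightarrow> bool" where
  "sober X \<longleftrightarrow> (\<forall>Z. irreducible_closed X Z \<longrightarrow> (\<exists>!x. generic_point X Z x))"

text \<open>Epimorphism in the category Sob, tested against all sober spaces whose
points live in the type 'c.\<close>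
definition sob_epi :: "'c itself \<Rightarrow> 'a topology \<Rightarrow> 'b topology \<Rightarrow> ('a \<Rightarrow> 'b) \<Rightarrow> bool" where
  "sob_epi _ X Y f \<longleftrightarrow>
     (\<forall>(Z::'c topology) g h. sober Z \<and> continuous_map Y Z g \<and> continuous_map Y Z h \<and>
        (\<forall>x\<in>topspace X. g (f x) = h (f x)) \<longrightarrow> (\<forall>y\<in>topspace Y. g y = h y))"

record 'a cis =
  carrier :: "'a set"
  add :: "'a \<Rightarrow> 'a \<Rightarrow> 'a"
  mul :: "'a \<Rightarrow> 'a \<Rightarrow> 'a"
  zero :: 'a
  one :: 'a
  Sum :: "'a set \<Rightarrow> 'a"

definition cis_le :: "'a cis \<Rightarrow> 'a \<Rightarrow> 'a \<Rightarrow> bool" where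
  "cis_le R a b \<longleftrightarrow> add R a b = b"

definition idealic_semiring :: "'a cis \<Rightarrow> bool" where
  "idealic_semiring R \<longleftrightarrow>
     zero R \<in> carrier R \<and> one R \<in> carrier R \<and>
     (\<forall>a\<in>carrier R. \<forall>b\<in>carrier R. add R a b \<in> carrier R \<and> mul R a b \<in> carrier R) \<and>
     (\<forall>a\<in>carrier R. \<forall>b\<in>carrier R. add R a b = add R b a \<and> mul R a b = mul R b a) \<and>
     (\<forall>a\<in>carrier R. \<forall>b\<in>carrier R. \<forall>c\<in>carrier R.
        add R (add R a b) c = add R a (add R b c) \<and> mul R (mul R a b) c = mul R a (mul R b c) \<and>
        mul R a (add R b c) = add R (mul R a b) (mul R a c)) \<and>
     (\<forall>a\<in>carrier R. add R (zero R) a = a \<and> mul R (one R) a = a \<and>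
        add R a a = a \<and> mul R (zero R) a = zero R \<and> add R (one R) a = one R)"

definition complete_idealic_semiring :: "'a cis \<Rightarrow> bool" where
  "complete_idealic_semiring R \<longleftrightarrow> idealic_semiring R \<and>
     (\<forall>S\<subseteq>carrier R. Sum R S \<in> carrier R \<and>
        (\<forall>s\<in>S. cis_le R s (Sum R S)) \<and>
        (\<forall>u\<in>carrier R. (\<forall>s\<in>S. cis_le R s u) \<longrightarrow> cis_le R (Sum R S) u) \<and>
        (\<forall>a\<in>carrier R. mul R a (Sum R S) = Sum R (mul R a ` S)))"

definition cis_hom :: "'a cis \<Rightarrow> 'b cis \<Rightarrow> ('a \<Rightarrow> 'b) \<Rightarrow> bool" where
  "cis_hom R T h \<longleftrightarrow>
     (\<forall>a\<in>carrier R. h a \<in> carrier T) \<and>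
     h (zero R) = zero T \<and> h (one R) = one T \<and>
     (\<forall>a\<in>carrier R. \<forall>b\<in>carrier R. h (mul R a b) = mul T (h a) (h b) \<and>
                                    h (add R a b) = add T (h a) (h b)) \<and>
     (\<forall>S\<subseteq>carrier R. h (Sum R S) = Sum T (h ` S))"

text \<open>Monomorphism in the category of complete idealic semirings, tested against
all complete idealic semirings whose elements live in the type 'd.\<close>
definition cis_mono :: "'d itself \<Rightarrow> 'a cis \<Rightarrow> 'b cis \<Rightarrow> ('a \<Rightarrow> 'b) \<Rightarrow> bool" where
  "cis_mono _ R T m \<longleftrightarrow>
     (\<forall>(A::'d cis) u v. complete_idealic_semiring A \<and> cis_hom A R u \<and> cis_hom A R v \<and>
        (\<forall>a\<in>carrier A. m (u a) = m (v a)) \<longrightarrow> (\<forall>a\<in>carrier A. u a = v a))"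

definition closed_sets_cis :: "'a topology \<Rightarrow> 'a set cis" where
  "closed_sets_cis X =
     \<lparr> carrier = {Z. closedin X Z},
       add = (\<lambda>Z W. Z \<inter> W),
       mul = (\<lambda>Z W. Z \<union> W),
       zero = topspace X,
       one = {},
       Sum = (\<lambda>S. topspace X \<inter> \<Inter>S) \<rparr>"

definition fsharp :: "'a topology \<Rightarrow> ('a \<Rightarrow> 'b) \<Rightarrow> 'b set \<Rightarrow> 'a set" where
  "fsharp X f W = {x \<in> topspace X. f x \<in> W}"

end

theory Submission
  imports Defs
begin

text \<open>
  A closed set Z of Y amounts both to a continuous map from Y to the Sierpinski space and to
  a morphism into C(Y) from the three-element chain 0 < c < 1 sending c to Z.  So if f#
  identifies two closed sets, composing with f, resp. f#, identifies two distinct such maps;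
  hence (1) and (3) force f# to be injective.  Conversely, if f# is injective and g, h agree
  on f(X), they pull every closed set back to the same closed set, so g y and h y are
  topologically indistinguishable and coincide because sober spaces are T0.  Finally f# W
  only depends on f(X) \<inter> W, and W is recovered as the closure of f(X) \<inter> W exactly when
  that set is dense in W.
\<close>

lemma cis_le_antisym:
  assumes "idealic_semiring R" "a \<in> carrier R" "b \<in> carrier R"
    and "cis_le R a b" "cis_le R b a"
  shows "a = b"
  using assms unfolding idealic_semiring_def cis_le_def by metis

lemma cis_zero_le: "idealic_semiring R \<Longrightarrow> a \<in> carrier R \<Longrightarrow> cis_le R (zero R) a"
  unfolding idealic_semiring_def cis_le_def by blast

lemma cis_Sum_eq_greatest:
  assumes R: "complete_idealic_semiring R" and S: "S \<subseteq> carrier R"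
    and b: "b \<in> insert (zero R) S" and ub: "\<forall>s\<in>S. cis_le R s b"
  shows "Sum R S = b"
proof -
  have ring: "idealic_semiring R" and Sum: "Sum R S \<in> carrier R"
    and upper: "\<forall>s\<in>S. cis_le R s (Sum R S)"
    and least: "\<forall>u\<in>carrier R. (\<forall>s\<in>S. cis_le R s u) \<longrightarrow> cis_le R (Sum R S) u"
    using R S unfolding complete_idealic_semiring_def by blast+
  have "zero R \<in> carrier R" using ring by (simp add: idealic_semiring_def)
  then have b_carrier: "b \<in> carrier R" using b S by auto
  have "cis_le R b (Sum R S)"
  proof (cases "b \<in> S")
    case True
    then show ?thesis using upper by blast
  next
    case False
    then have "b = zero R" using b by simp
    then show ?thesis using cis_zero_le[OF ring Sum] by simp
  qed
  moreover have "cis_le R (Sum R S) b" using least ub b_carrier by blast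
  ultimately show ?thesis using cis_le_antisym[OF ring Sum b_carrier] by simp
qed

definition chain3 :: "'d \<Rightarrow> 'd \<Rightarrow> 'd \<Rightarrow> 'd cis" where
  "chain3 p q r = \<lparr> carrier = {p,q,r},
     add = (\<lambda>a b. if a = r \<or> b = r then r else if a = q \<or> b = q then q else p),
     mul = (\<lambda>a b. if a = p \<or> b = p then p else if a = q \<or> b = q then q else r),
     zero = p, one = r,
     Sum = (\<lambda>S. if r \<in> S then r else if q \<in> S then q else p) \<rparr>"

lemma complete_idealic_semiring_chain3:
  assumes "distinct [p, q, r]"
  shows "complete_idealic_semiring (chain3 p q r)"
  unfolding complete_idealic_semiring_def
proof (intro conjI allI impI)
  have d: "q \<noteq> p" "r \<noteq> p" "r \<noteq> q" using assms by auto
  then show "idealic_semiring (chain3 p q r)"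
    using assms by (simp add: idealic_semiring_def chain3_def)
  fix S assume "S \<subseteq> carrier (chain3 p q r)"
  then have S: "S \<subseteq> {p, q, r}" by (simp add: chain3_def)
  show "Sum (chain3 p q r) S \<in> carrier (chain3 p q r)"
    by (simp add: chain3_def)
  show "\<forall>s\<in>S. cis_le (chain3 p q r) s (Sum (chain3 p q r) S)"
    using S assms by (auto simp: cis_le_def chain3_def)
  show "\<forall>u\<in>carrier (chain3 p q r). (\<forall>s\<in>S. cis_le (chain3 p q r) s u) \<longrightarrow>
          cis_le (chain3 p q r) (Sum (chain3 p q r) S) u"
    using assms by (auto simp: cis_le_def chain3_def)
  show "\<forall>a\<in>carrier (chain3 p q r). mul (chain3 p q r) a (Sum (chain3 p q r) S) =
          Sum (chain3 p q r) (mul (chain3 p q r) a ` S)"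
  proof
    fix a assume "a \<in> carrier (chain3 p q r)"
    then have a: "a = p \<or> a = q \<or> a = r" by (simp add: chain3_def)
    have "S \<in> Pow {p, q, r}" using S by simp
    then have "S \<in> {{}, {r}, {q}, {q, r}, {p}, {p, r}, {p, q}, {p, q, r}}"
      by (simp add: Pow_insert insert_commute)
    then show "mul (chain3 p q r) a (Sum (chain3 p q r) S) =
          Sum (chain3 p q r) (mul (chain3 p q r) a ` S)"
      using a d assms
      by (auto simp: chain3_def)
  qed
qed

definition chain3_map :: "'d \<Rightarrow> 'd \<Rightarrow> 'a cis \<Rightarrow> 'a \<Rightarrow> 'd \<Rightarrow> 'a" where
  "chain3_map p q R z x = (if x = p then zero R else if x = q then z else one R)"

lemma cis_hom_chain3_map:
  assumes R: "complete_idealic_semiring R" and pqr: "distinct [p, q, r]"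
    and z: "z \<in> carrier R" and idem: "mul R z z = z"
  shows "cis_hom (chain3 p q r) R (chain3_map p q R z)"
proof -
  let ?C = "chain3 p q r" and ?k = "chain3_map p q R z"
  have ring: "idealic_semiring R" using R by (simp add: complete_idealic_semiring_def)
  have d: "q \<noteq> p" "r \<noteq> p" "r \<noteq> q" using pqr by auto
  have carrier: "?k a \<in> carrier R" for a
    using ring z by (simp add: chain3_map_def idealic_semiring_def)
  have ops: "mul R (zero R) x = zero R" "mul R x (zero R) = zero R"
      "mul R (one R) x = x" "mul R x (one R) = x"
      "add R (zero R) x = x" "add R x (zero R) = x"
      "add R (one R) x = one R" "add R x (one R) = one R" "add R x x = x"
    if "x \<in> carrier R" for x
    using ring that unfolding idealic_semiring_def by metis+
  have zero_one: "zero R \<in> carrier R" "one R \<in> carrier R"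
    using ring by (simp_all add: idealic_semiring_def)
  have preserves_ops: "?k (mul ?C a b) = mul R (?k a) (?k b) \<and> ?k (add ?C a b) = add R (?k a) (?k b)"
    if "a \<in> carrier ?C" "b \<in> carrier ?C" for a b
    using that d pqr idem ops[OF z] ops[OF zero_one(1)] ops[OF zero_one(2)]
    by (auto simp: chain3_def chain3_map_def)
  have Sum: "?k (Sum ?C S) = Sum R (?k ` S)" if S: "S \<subseteq> carrier ?C" for S
  proof (rule sym, rule cis_Sum_eq_greatest[OF R])
    show "?k ` S \<subseteq> carrier R" using carrier by blast
    have "Sum ?C S \<in> insert p S" by (simp add: chain3_def)
    then show "?k (Sum ?C S) \<in> insert (zero R) (?k ` S)"
      by (auto simp: chain3_map_def)
    show "\<forall>t\<in>?k ` S. cis_le R t (?k (Sum ?C S))"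
    proof
      fix t assume "t \<in> ?k ` S"
      then obtain s where s: "s \<in> S" and t: "t = ?k s" by blast
      have "add ?C s (Sum ?C S) = Sum ?C S"
        using complete_idealic_semiring_chain3[OF pqr] S s
        unfolding complete_idealic_semiring_def cis_le_def by blast
      moreover have "Sum ?C S \<in> carrier ?C" by (simp add: chain3_def)
      ultimately show "cis_le R t (?k (Sum ?C S))"
        using preserves_ops S s t unfolding cis_le_def by (metis subsetD)
    qed
  qed
  show ?thesis
    unfolding cis_hom_def using carrier preserves_ops Sum d
    by (simp add: chain3_def chain3_map_def)
qed

lemma inj_on_if_cis_mono:
  assumes R: "complete_idealic_semiring R" and idem: "\<forall>a\<in>carrier R. mul R a a = a"
    and T: "idealic_semiring T" and m: "cis_hom R T m"
    and three: "\<exists>p q r :: 'd. p \<noteq> q \<and> p \<noteq> r \<and> q \<noteq> r"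
    and mono: "cis_mono TYPE('d) R T m"
  shows "inj_on m (carrier R)"
proof -
  obtain p q r :: 'd where pqr: "distinct [p, q, r]" using three by auto
  have ring: "idealic_semiring R" using R by (simp add: complete_idealic_semiring_def)
  txt \<open>If m identifies a and b, it also identifies a + b with a, so the homomorphisms
    from the chain selecting a + b and a agree after m.\<close>
  have absorb: "add R a b = a" if a: "a \<in> carrier R" and b: "b \<in> carrier R" and eq: "m a = m b" for a b
  proof -
    let ?c = "add R a b"
    have c: "?c \<in> carrier R" using ring a b by (simp add: idealic_semiring_def)
    have "m a \<in> carrier T" using m a by (simp add: cis_hom_def)
    then have "m ?c = m a"
      using m a b eq T unfolding cis_hom_def idealic_semiring_def by metis
    then have "\<forall>x\<in>carrier (chain3 p q r).
        m (chain3_map p q R ?c x) = m (chain3_map p q R a x)"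
      by (simp add: chain3_map_def)
    moreover have "cis_hom (chain3 p q r) R (chain3_map p q R ?c)"
      and "cis_hom (chain3 p q r) R (chain3_map p q R a)"
      using cis_hom_chain3_map[OF R pqr] idem c a by auto
    ultimately have "\<forall>x\<in>carrier (chain3 p q r). chain3_map p q R ?c x = chain3_map p q R a x"
      using mono complete_idealic_semiring_chain3[OF pqr] unfolding cis_mono_def by blast
    then have "chain3_map p q R ?c q = chain3_map p q R a q" by (simp add: chain3_def)
    then show ?thesis using pqr by (auto simp: chain3_map_def)
  qed
  show ?thesis
  proof (rule inj_onI)
    fix a b assume a: "a \<in> carrier R" and b: "b \<in> carrier R" and eq: "m a = m b"
    have "a = add R a b" using absorb[OF a b eq] by simp
    also have "\<dots> = add R b a" using ring a b by (simp add: idealic_semiring_def)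
    also have "\<dots> = b" using absorb[OF b a eq[symmetric]] .
    finally show "a = b" .
  qed
qed

lemma cis_mono_iff_inj_on:
  assumes "complete_idealic_semiring R" and "\<forall>a\<in>carrier R. mul R a a = a"
    and "idealic_semiring T" and "cis_hom R T m"
    and "\<exists>p q r :: 'd. p \<noteq> q \<and> p \<noteq> r \<and> q \<noteq> r"
  shows "cis_mono TYPE('d) R T m \<longleftrightarrow> inj_on m (carrier R)"
proof
  assume "cis_mono TYPE('d) R T m"
  then show "inj_on m (carrier R)" by (rule inj_on_if_cis_mono[OF assms])
next
  assume inj: "inj_on m (carrier R)"
  show "cis_mono TYPE('d) R T m"
    unfolding cis_mono_def
  proof (intro allI impI ballI)
    fix A :: "'d cis" and u v a
    assume "complete_idealic_semiring A \<and> cis_hom A R u \<and> cis_hom A R v \<and>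
        (\<forall>a\<in>carrier A. m (u a) = m (v a))"
      and "a \<in> carrier A"
    then have "u a \<in> carrier R" "v a \<in> carrier R" "m (u a) = m (v a)"
      by (simp_all add: cis_hom_def)
    then show "u a = v a" using inj_onD[OF inj] by blast
  qed
qed

lemma closedin_topspace_Int_Inter: "\<forall>Z\<in>S. closedin X Z \<Longrightarrow> closedin X (topspace X \<inter> \<Inter>S)"
  using closedin_Inter[of "insert (topspace X) S" X] by auto

lemma idealic_semiring_closed_sets: "idealic_semiring (closed_sets_cis X)"
  unfolding idealic_semiring_def closed_sets_cis_def by (auto dest: closedin_subset)

lemma complete_idealic_semiring_closed_sets: "complete_idealic_semiring (closed_sets_cis X)"
  unfolding complete_idealic_semiring_def
  using idealic_semiring_closed_sets[of X] closedin_topspace_Int_Inter[of _ X]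
  by (auto simp: closed_sets_cis_def cis_le_def dest: closedin_subset)

lemma cis_hom_fsharp:
  assumes "continuous_map X Y f"
  shows "cis_hom (closed_sets_cis Y) (closed_sets_cis X) (fsharp X f)"
  using assms closedin_continuous_map_preimage[OF assms]
    continuous_map_image_subset_topspace[OF assms]
  unfolding cis_hom_def closed_sets_cis_def fsharp_def by auto

lemma irreducible_closed_closure_of_singleton:
  assumes "x \<in> topspace X"
  shows "irreducible_closed X (X closure_of {x})"
  unfolding irreducible_closed_def
proof (intro conjI allI impI)
  have x: "x \<in> X closure_of {x}" using assms closure_of_subset[of "{x}" X] by simp
  then show "X closure_of {x} \<noteq> {}" by blast
  fix A B assume AB: "closedin X A \<and> closedin X B \<and> X closure_of {x} = A \<union> B"
  then have "x \<in> A \<or> x \<in> B" using x by blast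
  then show "X closure_of {x} = A \<or> X closure_of {x} = B"
    using AB closure_of_minimal[of "{x}" A X] closure_of_minimal[of "{x}" B X] by auto
qed simp

lemma sober_imp_t0_space:
  assumes "sober X"
  shows "t0_space X"
  unfolding t0_space_closure_of_sing
proof (intro ballI impI)
  fix x y assume x: "x \<in> topspace X" and y: "y \<in> topspace X"
    and eq: "X closure_of {x} = X closure_of {y}"
  have "\<exists>!z. generic_point X (X closure_of {x}) z"
    using assms irreducible_closed_closure_of_singleton[OF x] by (simp add: sober_def)
  moreover have "generic_point X (X closure_of {x}) x" "generic_point X (X closure_of {x}) y"
    using x y eq by (simp_all add: generic_point_def)
  ultimately show "x = y" by blast
qed

definition sierpinski_space :: "'c \<Rightarrow> 'c \<Rightarrow> 'c topology" where
  "sierpinski_space p q = topology (\<lambda>U. U \<in> {{}, {q}, {p, q}})"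

lemma openin_sierpinski_space: "openin (sierpinski_space p q) U \<longleftrightarrow> U \<in> {{}, {q}, {p, q}}"
proof -
  have "istopology (\<lambda>U. U \<in> {{}, {q}, {p, q}})"
    unfolding istopology_def
  proof (intro conjI allI impI)
    fix K assume K: "\<forall>U\<in>K. U \<in> {{}, {q}, {p, q}}"
    consider "{p, q} \<in> K" | "{p, q} \<notin> K" "{q} \<in> K" | "{p, q} \<notin> K" "{q} \<notin> K" by blast
    then show "\<Union>K \<in> {{}, {q}, {p, q}}"
      by cases (use K in auto)
  qed auto
  then show ?thesis by (simp add: sierpinski_space_def)
qed

lemma topspace_sierpinski_space: "topspace (sierpinski_space p q) = {p, q}"
  unfolding topspace_def openin_sierpinski_space by auto

lemma sober_sierpinski_space:
  assumes "p \<noteq> q"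
  shows "sober (sierpinski_space p q)"
  unfolding sober_def
proof (intro allI impI)
  let ?S = "sierpinski_space p q"
  fix C assume "irreducible_closed ?S C"
  then have "closedin ?S C" "C \<noteq> {}" by (auto simp: irreducible_closed_def)
  then have C: "C = {p} \<or> C = {p, q}"
    using assms unfolding closedin_def topspace_sierpinski_space openin_sierpinski_space by auto
  have "closedin ?S {p}"
    using assms unfolding closedin_def topspace_sierpinski_space openin_sierpinski_space by auto
  then have "?S closure_of {p} = {p}" by (rule closure_of_closedin)
  moreover have "?S closure_of {q} = {p, q}"
    using assms unfolding closure_of_def topspace_sierpinski_space openin_sierpinski_space by auto
  ultimately have "generic_point ?S C x \<longleftrightarrow> (x = p \<and> C = {p}) \<or> (x = q \<and> C = {p, q})" for x
    unfolding generic_point_def topspace_sierpinski_space by auto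
  then show "\<exists>!x. generic_point ?S C x" using C assms by auto
qed

lemma continuous_map_sierpinski_space_indicator:
  assumes "closedin Y Z"
  shows "continuous_map Y (sierpinski_space p q) (\<lambda>y. if y \<in> Z then p else q)"
  unfolding continuous_map_def topspace_sierpinski_space openin_sierpinski_space
proof (intro conjI allI impI)
  have open_preimages: "openin Y V" if "V \<in> {{}, topspace Y - Z, topspace Y}" for V
    using that assms by (auto simp: closedin_def)
  fix U assume "U \<in> {{}, {q}, {p, q}}"
  then have "{y \<in> topspace Y. (if y \<in> Z then p else q) \<in> U} \<in>
      {{}, topspace Y - Z, topspace Y}"
    by auto
  then show "openin Y {y \<in> topspace Y. (if y \<in> Z then p else q) \<in> U}"
    by (rule open_preimages)
qed auto

lemma inj_on_fsharp_if_sob_epi: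
  assumes epi: "sob_epi TYPE('c) X Y f" and two: "\<exists>p q :: 'c. p \<noteq> q"
  shows "inj_on (fsharp X f) {W. closedin Y W}"
proof (rule inj_onI)
  obtain p q :: 'c where pq: "p \<noteq> q" using two by blast
  let ?\<chi> = "\<lambda>V y. if y \<in> V then p else q"
  fix Z W assume Z: "Z \<in> {W. closedin Y W}" and W: "W \<in> {W. closedin Y W}"
    and eq: "fsharp X f Z = fsharp X f W"
  have "\<forall>x\<in>topspace X. ?\<chi> Z (f x) = ?\<chi> W (f x)"
    using eq by (auto simp: fsharp_def set_eq_iff)
  moreover have "continuous_map Y (sierpinski_space p q) (?\<chi> Z)"
    and "continuous_map Y (sierpinski_space p q) (?\<chi> W)"
    using Z W by (simp_all add: continuous_map_sierpinski_space_indicator)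
  ultimately have "\<forall>y\<in>topspace Y. ?\<chi> Z y = ?\<chi> W y"
    using epi sober_sierpinski_space[OF pq] unfolding sob_epi_def by blast
  then have "\<forall>y\<in>topspace Y. y \<in> Z \<longleftrightarrow> y \<in> W"
    using pq by (metis (full_types))
  then show "Z = W" using Z W closedin_subset by blast
qed

lemma sob_epi_if_inj_on_fsharp:
  assumes f: "continuous_map X Y f" and inj: "inj_on (fsharp X f) {W. closedin Y W}"
  shows "sob_epi TYPE('c) X Y f"
  unfolding sob_epi_def
proof (intro allI impI ballI)
  fix Z :: "'c topology" and g h y
  assume H: "sober Z \<and> continuous_map Y Z g \<and> continuous_map Y Z h \<and>
      (\<forall>x\<in>topspace X. g (f x) = h (f x))"
    and y: "y \<in> topspace Y"
  have "g y \<in> C \<longleftrightarrow> h y \<in> C" if C: "closedin Z C" for C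
  proof -
    let ?G = "{y \<in> topspace Y. g y \<in> C}" and ?H = "{y \<in> topspace Y. h y \<in> C}"
    have "closedin Y ?G" "closedin Y ?H"
      using H C closedin_continuous_map_preimage by blast+
    moreover have "fsharp X f ?G = fsharp X f ?H"
      using H continuous_map_image_subset_topspace[OF f] by (auto simp: fsharp_def)
    ultimately have "?G = ?H" using inj by (auto dest: inj_onD)
    then show ?thesis using y by blast
  qed
  moreover have "t0_space Z" using H sober_imp_t0_space by blast
  moreover have "g y \<in> topspace Z" "h y \<in> topspace Z"
    using H y continuous_map_image_subset_topspace by blast+
  ultimately show "g y = h y" unfolding t0_space by blast
qed

lemma image_fsharp: "f ` fsharp X f W = f ` topspace X \<inter> W"
  by (auto simp: fsharp_def)

lemma inj_on_fsharp_iff_dense: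
  "inj_on (fsharp X f) {W. closedin Y W} \<longleftrightarrow>
    (\<forall>z. closedin Y z \<longrightarrow> z \<subseteq> Y closure_of (f ` topspace X \<inter> z))"
proof
  assume inj: "inj_on (fsharp X f) {W. closedin Y W}"
  show "\<forall>z. closedin Y z \<longrightarrow> z \<subseteq> Y closure_of (f ` topspace X \<inter> z)"
  proof (intro allI impI)
    fix z assume z: "closedin Y z"
    let ?z = "Y closure_of (f ` topspace X \<inter> z)"
    have sub: "?z \<subseteq> z" using z by (simp add: closure_of_minimal)
    have "f ` topspace X \<inter> z \<subseteq> topspace Y" using closedin_subset[OF z] by blast
    then have "f ` topspace X \<inter> z \<subseteq> ?z" by (rule closure_of_subset)
    with sub have "fsharp X f ?z = fsharp X f z" by (auto simp: fsharp_def)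
    then have "?z = z" using inj z by (auto dest: inj_onD)
    then show "z \<subseteq> ?z" by simp
  qed
next
  assume dense: "\<forall>z. closedin Y z \<longrightarrow> z \<subseteq> Y closure_of (f ` topspace X \<inter> z)"
  have recover: "Y closure_of (f ` fsharp X f Z) = Z" if Z: "closedin Y Z" for Z
  proof (rule subset_antisym)
    show "Y closure_of (f ` fsharp X f Z) \<subseteq> Z"
      using Z by (simp add: closure_of_minimal image_fsharp)
    show "Z \<subseteq> Y closure_of (f ` fsharp X f Z)"
      using dense Z by (simp add: image_fsharp)
  qed
  show "inj_on (fsharp X f) {W. closedin Y W}"
    by (rule inj_onI) (metis mem_Collect_eq recover)
qed

theorem proposition1p6:
  fixes X :: "'a topology" and Y :: "'b topology" and f :: "'a \<Rightarrow> 'b"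
  assumes "sober X" and "sober Y" and "continuous_map X Y f"
    and "\<exists>p q :: 'c. p \<noteq> q"
    and "\<exists>p q r :: 'd. p \<noteq> q \<and> p \<noteq> r \<and> q \<noteq> r"
  shows "(sob_epi TYPE('c) X Y f \<longleftrightarrow> inj_on (fsharp X f) {W. closedin Y W})
       \<and> (inj_on (fsharp X f) {W. closedin Y W} \<longleftrightarrow>
            cis_mono TYPE('d) (closed_sets_cis Y) (closed_sets_cis X) (fsharp X f))
       \<and> (cis_mono TYPE('d) (closed_sets_cis Y) (closed_sets_cis X) (fsharp X f) \<longleftrightarrow>
            (\<forall>z. closedin Y z \<longrightarrow> z \<subseteq> Y closure_of (f ` topspace X \<inter> z)))"
proof -
  have "sob_epi TYPE('c) X Y f \<longleftrightarrow> inj_on (fsharp X f) {W. closedin Y W}"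
    using inj_on_fsharp_if_sob_epi[OF _ assms(4)] sob_epi_if_inj_on_fsharp[OF assms(3)] by blast
  moreover have "cis_mono TYPE('d) (closed_sets_cis Y) (closed_sets_cis X) (fsharp X f) \<longleftrightarrow>
      inj_on (fsharp X f) {W. closedin Y W}"
  proof -
    have "\<forall>a\<in>carrier (closed_sets_cis Y). mul (closed_sets_cis Y) a a = a"
      by (simp add: closed_sets_cis_def)
    then show ?thesis
      using cis_mono_iff_inj_on[OF complete_idealic_semiring_closed_sets _ idealic_semiring_closed_sets
          cis_hom_fsharp[OF assms(3)] assms(5)]
      by (simp add: closed_sets_cis_def)
  qed
  moreover have "inj_on (fsharp X f) {W. closedin Y W} \<longleftrightarrow>
      (\<forall>z. closedin Y z \<longrightarrow> z \<subseteq> Y closure_of (f ` topspace X \<inter> z))"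
    by (rule inj_on_fsharp_iff_dense)
  ultimately show ?thesis by blast
qed

end
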